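(* Let $G$ be a compact Abelian group with a continuous length function $l$, and let $(H_n)_{n\in\mathbb{N}}$ be closed subgroups of $G$ converging to $G$ for the Hausdorff distance of $d_l(g,g')=l(g^{-1}g')$. For each $n$ let $J_n\subseteq\widehat G$ be the annihilator of $H_n$ and $q_n:\widehat G\to\widehat{H_n}=\widehat G/J_n$ the canonical surjection. Let $F$ be a finite subset of $\widehat G$. Then there exists $N\in\mathbb{N}$ such that for all $n\ge N$, $q_n$ is injective on $F$.
   Context: A length function: $l\ge0$, $l(g)=0$ iff $g$ is the unit, symmetric, subadditive. *)

theory Defs
  imports "HOL-Analysis.Analysis"
begin

text \<open>Compact abelian groups are modelled as a type of class topological_ab_group_add
(additive notation: g^{-1} g' becomes -g + g') which is Hausdorff and compact.\<close>

definition length_function :: "('a::ab_group_add \<Rightarrow> real) \<Rightarrow> bool" where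
  "length_function l \<longleftrightarrow>
     (\<forall>g. 0 \<le> l g) \<and> (\<forall>g. l g = 0 \<longleftrightarrow> g = 0) \<and>
     (\<forall>g. l (- g) = l g) \<and> (\<forall>g h. l (g + h) \<le> l g + l h)"

definition length_dist :: "('a::ab_group_add \<Rightarrow> real) \<Rightarrow> 'a \<Rightarrow> 'a \<Rightarrow> real" where
  "length_dist l g g' = l (- g + g')"

definition closed_subgroup :: "'a::topological_ab_group_add set \<Rightarrow> bool" where
  "closed_subgroup H \<longleftrightarrow> closed H \<and> 0 \<in> H \<and>
     (\<forall>x\<in>H. \<forall>y\<in>H. x + y \<in> H) \<and> (\<forall>x\<in>H. - x \<in> H)"

definition hausdorff_dist :: "('a \<Rightarrow> 'a \<Rightarrow> real) \<Rightarrow> 'a set \<Rightarrow> 'a set \<Rightarrow> real" where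
  "hausdorff_dist d A B =
     max (SUP a\<in>A. INF b\<in>B. d a b) (SUP b\<in>B. INF a\<in>A. d a b)"

definition dual_group :: "('a::topological_ab_group_add \<Rightarrow> complex) set" where
  "dual_group = {c. continuous_on UNIV c \<and> (\<forall>x. norm (c x) = 1) \<and>
                     (\<forall>x y. c (x + y) = c x * c y)}"

definition annihilator :: "'a::topological_ab_group_add set \<Rightarrow> ('a \<Rightarrow> complex) set" where
  "annihilator H = {c \<in> dual_group. \<forall>h\<in>H. c h = 1}"

definition quot_map :: "('a \<Rightarrow> complex) set \<Rightarrow> ('a \<Rightarrow> complex) \<Rightarrow> ('a \<Rightarrow> complex) set" where
  "quot_map J c = (\<lambda>\<psi>. \<lambda>x. c x * \<psi> x) ` J"

end

theory Submission
  imports Defs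
begin

text \<open>If two characters c1 \<noteq> c2 have the same image in the dual of H, they agree on H,
  so x \<mapsto> |c1 x - c2 x| is H-invariant. Pick g with |c1 g - c2 g| = \<epsilon> > 0: the whole
  coset g - H lies in the compact set K = {x. |c1 x - c2 x| \<ge> \<epsilon>}, which avoids 0, so l is
  bounded below on K by some \<delta> > 0. Hence g is at distance \<ge> \<delta> from H, and H is not
  \<delta>-dense in G. Since F is finite, one \<delta> works for all pairs in F.\<close>

lemma dual_group_add: "c \<in> dual_group \<Longrightarrow> c (x + y) = c x * c y"
  unfolding dual_group_def by blast

lemma dual_group_norm: "c \<in> dual_group \<Longrightarrow> norm (c x) = 1"
  unfolding dual_group_def by blast

lemma dual_group_zero:
  assumes "c \<in> dual_group"
  shows "c 0 = 1"
proof -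
  have "c 0 * 1 = c 0 * c 0"
    using dual_group_add[OF assms, of 0 0] by simp
  moreover have "c 0 \<noteq> 0"
    using dual_group_norm[OF assms, of 0] by auto
  ultimately show ?thesis
    by (metis mult_left_cancel)
qed

lemma one_in_annihilator: "(\<lambda>_. 1) \<in> annihilator H"
  unfolding annihilator_def dual_group_def by auto

lemma quot_map_eq_imp_eq_on:
  assumes "quot_map (annihilator H) c\<^sub>1 = quot_map (annihilator H) c\<^sub>2" and "h \<in> H"
  shows "c\<^sub>1 h = c\<^sub>2 h"
proof -
  have "c\<^sub>1 \<in> quot_map (annihilator H) c\<^sub>1"
    unfolding quot_map_def using one_in_annihilator by force
  then obtain \<psi> where "\<psi> \<in> annihilator H" and "c\<^sub>1 = (\<lambda>x. c\<^sub>2 x * \<psi> x)"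
    using assms(1) unfolding quot_map_def by auto
  then show ?thesis
    using assms(2) unfolding annihilator_def by auto
qed

lemma dual_group_dist_translate:
  assumes "c\<^sub>1 \<in> dual_group" and "c\<^sub>2 \<in> dual_group" and "c\<^sub>1 a = c\<^sub>2 a"
  shows "norm (c\<^sub>1 (a + x) - c\<^sub>2 (a + x)) = norm (c\<^sub>1 x - c\<^sub>2 x)"
proof -
  have "c\<^sub>1 (a + x) - c\<^sub>2 (a + x) = c\<^sub>1 a * (c\<^sub>1 x - c\<^sub>2 x)"
    using assms by (simp add: dual_group_add algebra_simps)
  then show ?thesis
    by (simp add: norm_mult dual_group_norm[OF assms(1)])
qed

lemma length_function_bounded_below_on_compact:
  assumes "length_function l" and "continuous_on K l" and "compact K" and "0 \<notin> K"
  shows "\<exists>\<delta>>0. \<forall>x\<in>K. \<delta> \<le> l x"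
proof (cases "K = {}")
  case False
  then obtain k where "k \<in> K" and k_min: "\<forall>x\<in>K. l k \<le> l x"
    using continuous_attains_inf[OF assms(3) _ assms(2)] by blast
  moreover have "l k > 0"
    using assms(1,4) \<open>k \<in> K\<close> unfolding length_function_def by (metis order_le_less)
  ultimately show ?thesis
    by blast
qed (auto intro: exI[of _ 1])

lemma hausdorff_dist_ge:
  assumes "b \<in> B" and "A \<noteq> {}"
    and "\<And>a b. a \<in> A \<Longrightarrow> b \<in> B \<Longrightarrow> 0 \<le> d a b"
    and "\<And>a b. a \<in> A \<Longrightarrow> b \<in> B \<Longrightarrow> d a b \<le> M"
    and "\<And>a. a \<in> A \<Longrightarrow> \<delta> \<le> d a b"
  shows "\<delta> \<le> hausdorff_dist d A B"
proof -
  obtain a\<^sub>0 where "a\<^sub>0 \<in> A"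
    using assms(2) by blast
  have "bdd_below ((\<lambda>a. d a b') ` A)" if "b' \<in> B" for b'
    using assms(3) that by (intro bdd_belowI[of _ 0]) auto
  then have "bdd_above ((\<lambda>b'. INF a\<in>A. d a b') ` B)"
    using \<open>a\<^sub>0 \<in> A\<close> assms(4) by (intro bdd_aboveI[of _ M]) (auto intro: cINF_lower2)
  have "\<delta> \<le> (INF a\<in>A. d a b)"
    using assms(2,5) by (rule cINF_greatest)
  also have "\<dots> \<le> (SUP b'\<in>B. INF a\<in>A. d a b')"
    using \<open>bdd_above _\<close> assms(1) by (rule cSUP_upper2) simp
  also have "\<dots> \<le> hausdorff_dist d A B"
    unfolding hausdorff_dist_def by simp
  finally show ?thesis .
qed

lemma quot_map_separates_near_dense:
  fixes l :: "'a::{topological_ab_group_add, t2_space} \<Rightarrow> real"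
  assumes "compact (UNIV :: 'a set)" and "length_function l" and "continuous_on UNIV l"
    and "c\<^sub>1 \<in> dual_group" and "c\<^sub>2 \<in> dual_group" and "c\<^sub>1 \<noteq> c\<^sub>2"
  shows "\<exists>\<delta>>0. \<forall>H. 0 \<in> H \<longrightarrow> (\<forall>x\<in>H. - x \<in> H) \<longrightarrow>
           hausdorff_dist (length_dist l) H UNIV < \<delta> \<longrightarrow>
           quot_map (annihilator H) c\<^sub>1 \<noteq> quot_map (annihilator H) c\<^sub>2"
proof -
  define D where "D x = norm (c\<^sub>1 x - c\<^sub>2 x)" for x
  obtain g where "c\<^sub>1 g \<noteq> c\<^sub>2 g"
    using assms(6) by blast
  define K where "K = {x. D g \<le> D x}"
  have "continuous_on UNIV D"
    using assms(4,5) unfolding D_def dual_group_def by (auto intro!: continuous_intros)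
  then have "closed K"
    unfolding K_def by (rule closed_Collect_le[OF continuous_on_const])
  then have "compact K"
    using compact_Int_closed[OF assms(1)] by (metis inf_top.left_neutral)
  moreover have "0 \<notin> K"
    using \<open>c\<^sub>1 g \<noteq> c\<^sub>2 g\<close> dual_group_zero[OF assms(4)] dual_group_zero[OF assms(5)]
    unfolding K_def D_def by auto
  ultimately obtain \<delta> where "\<delta> > 0" and \<delta>: "\<forall>x\<in>K. \<delta> \<le> l x"
    using length_function_bounded_below_on_compact[OF assms(2) continuous_on_subset[OF assms(3)]]
    by blast
  obtain M where M: "\<forall>x. l x \<le> M"
    using continuous_attains_sup[OF assms(1) _ assms(3)] by blast
  have "quot_map (annihilator H) c\<^sub>1 \<noteq> quot_map (annihilator H) c\<^sub>2"
    if "0 \<in> H" and H_uminus: "\<forall>x\<in>H. - x \<in> H"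
      and "hausdorff_dist (length_dist l) H UNIV < \<delta>" for H
  proof
    assume same_coset: "quot_map (annihilator H) c\<^sub>1 = quot_map (annihilator H) c\<^sub>2"
    have "-a + g \<in> K" if "a \<in> H" for a
    proof -
      have "c\<^sub>1 (-a) = c\<^sub>2 (-a)"
        using quot_map_eq_imp_eq_on[OF same_coset] H_uminus that by blast
      then have "D (-a + g) = D g"
        unfolding D_def by (rule dual_group_dist_translate[OF assms(4,5)])
      then show ?thesis
        unfolding K_def by simp
    qed
    then have "\<delta> \<le> hausdorff_dist (length_dist l) H UNIV"
      using \<open>0 \<in> H\<close> assms(2) M \<delta> unfolding length_dist_def length_function_def
      by (intro hausdorff_dist_ge[of g _ _ _ M]) auto
    with \<open>hausdorff_dist (length_dist l) H UNIV < \<delta>\<close> show False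
      by simp
  qed
  with \<open>\<delta> > 0\<close> show ?thesis
    by blast
qed

lemma eventually_inj_on_finite:
  assumes "finite A"
    and "\<And>x y. x \<in> A \<Longrightarrow> y \<in> A \<Longrightarrow> x \<noteq> y \<Longrightarrow> eventually (\<lambda>n. f n x \<noteq> f n y) F"
  shows "eventually (\<lambda>n. inj_on (f n) A) F"
proof -
  have "eventually (\<lambda>n. \<forall>x\<in>A. \<forall>y\<in>A. x \<noteq> y \<longrightarrow> f n x \<noteq> f n y) F"
    using assms by (intro eventually_ball_finite ballI) (auto intro: eventually_mono)
  then show ?thesis
    by (rule eventually_mono) (auto simp: inj_on_def)
qed

theorem mainTheorem10:
  fixes l :: "'a::{topological_ab_group_add, t2_space} \<Rightarrow> real"
    and H :: "nat \<Rightarrow> 'a set"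
    and F :: "('a \<Rightarrow> complex) set"
  assumes "compact (UNIV :: 'a set)"
    and "length_function l"
    and "continuous_on UNIV l"
    and "\<And>n. closed_subgroup (H n)"
    and "(\<lambda>n. hausdorff_dist (length_dist l) (H n) UNIV) \<longlonglongrightarrow> 0"
    and "finite F"
    and "F \<subseteq> dual_group"
  shows "\<exists>N. \<forall>n\<ge>N. inj_on (quot_map (annihilator (H n))) F"
proof -
  have "eventually (\<lambda>n. quot_map (annihilator (H n)) c\<^sub>1 \<noteq> quot_map (annihilator (H n)) c\<^sub>2)
          sequentially"
    if in_F: "c\<^sub>1 \<in> F" "c\<^sub>2 \<in> F" and "c\<^sub>1 \<noteq> c\<^sub>2" for c\<^sub>1 c\<^sub>2
  proof -
    obtain \<delta> where "\<delta> > 0" and separates: "\<forall>H. 0 \<in> H \<longrightarrow> (\<forall>x\<in>H. - x \<in> H) \<longrightarrow>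
        hausdorff_dist (length_dist l) H UNIV < \<delta> \<longrightarrow>
        quot_map (annihilator H) c\<^sub>1 \<noteq> quot_map (annihilator H) c\<^sub>2"
      using quot_map_separates_near_dense[OF assms(1-3)] in_F \<open>c\<^sub>1 \<noteq> c\<^sub>2\<close> assms(7)
      by (meson subsetD)
    have "eventually (\<lambda>n. hausdorff_dist (length_dist l) (H n) UNIV < \<delta>) sequentially"
      using order_tendstoD(2)[OF assms(5) \<open>\<delta> > 0\<close>] .
    then show ?thesis
      by (rule eventually_mono) (use separates assms(4) in \<open>auto simp: closed_subgroup_def\<close>)
  qed
  then have "eventually (\<lambda>n. inj_on (quot_map (annihilator (H n))) F) sequentially"
    using assms(6) by (intro eventually_inj_on_finite)
  then show ?thesis
    unfolding eventually_sequentially .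
qed

end
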